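(* Let $\omega,\gamma_+,\gamma_-,\gamma_z\in\mathbb{R}$ and let $\mathcal{L}^\ddagger:\mathcal{M}_2\to\mathcal{M}_2$ be $$\mathcal{L}^\ddagger(X)=\tfrac{i\omega}{2}[\sigma_z,X]+\gamma_+\Big(\sigma_-X\sigma_+-\tfrac12\{\sigma_-\sigma_+,X\}\Big)+\gamma_-\Big(\sigma_+X\sigma_--\tfrac12\{\sigma_+\sigma_-,X\}\Big)+\gamma_z(\sigma_zX\sigma_z-X).$$ Then $e^{t\mathcal{L}^\ddagger}$ is a unital Schwarz map for every $t\ge 0$ if and only if $\gamma_+\ge0$, $\gamma_-\ge 0$, $\gamma_++4\gamma_z\ge 0$ and $\gamma_-+4\gamma_z\ge 0$.
   Context: $\sigma_x,\sigma_y,\sigma_z$ are the Pauli matrices, $\sigma_\pm=\frac12(\sigma_x\pm i\sigma_y)$, $[A,B]=AB-BA$, $\{A,B\}=AB+BA$. A unital Schwarz map on $\mathcal{M}_n$ is a linear map $\Phi$ with $\Phi(\mathbb{1})=\mathbb{1}$ and $\Phi(X^\dagger X)\ge\Phi(X)^\dagger\Phi(X)$ for all $X\in\mathcal{M}_n$. *)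

theory Defs
  imports "HOL-Analysis.Analysis"
begin

type_synonym cmat2 = "complex^2^2"

definition mat2 :: "complex \<Rightarrow> complex \<Rightarrow> complex \<Rightarrow> complex \<Rightarrow> cmat2" where
  "mat2 a b c d = (\<chi> i j. if i = 1 then (if j = 1 then a else b) else (if j = 1 then c else d))"

definition csc :: "complex \<Rightarrow> cmat2 \<Rightarrow> cmat2" where
  "csc c A = (\<chi> i j. c * A$i$j)"

definition adj :: "cmat2 \<Rightarrow> cmat2" where
  "adj A = (\<chi> i j. cnj (A$j$i))"

definition sigma_x :: cmat2 where "sigma_x = mat2 0 1 1 0"
definition sigma_y :: cmat2 where "sigma_y = mat2 0 (-\<i>) \<i> 0"
definition sigma_z :: cmat2 where "sigma_z = mat2 1 0 0 (-1)"
definition sigma_plus :: cmat2 where "sigma_plus = csc (1/2) (sigma_x + csc \<i> sigma_y)"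
definition sigma_minus :: cmat2 where "sigma_minus = csc (1/2) (sigma_x - csc \<i> sigma_y)"

definition comm :: "cmat2 \<Rightarrow> cmat2 \<Rightarrow> cmat2" where "comm A B = A ** B - B ** A"
definition acomm :: "cmat2 \<Rightarrow> cmat2 \<Rightarrow> cmat2" where "acomm A B = A ** B + B ** A"

definition psd :: "cmat2 \<Rightarrow> bool" where
  "psd A \<longleftrightarrow> (\<forall>v::complex^2. let q = (\<Sum>i\<in>UNIV. \<Sum>j\<in>UNIV. cnj (v$i) * A$i$j * v$j)
                 in Im q = 0 \<and> Re q \<ge> 0)"

definition clinear_map :: "(cmat2 \<Rightarrow> cmat2) \<Rightarrow> bool" where
  "clinear_map \<Phi> \<longleftrightarrow> (\<forall>c X Y. \<Phi> (csc c X + Y) = csc c (\<Phi> X) + \<Phi> Y)"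

definition unital_schwarz :: "(cmat2 \<Rightarrow> cmat2) \<Rightarrow> bool" where
  "unital_schwarz \<Phi> \<longleftrightarrow> clinear_map \<Phi> \<and> \<Phi> (mat 1) = mat 1 \<and>
     (\<forall>X. psd (\<Phi> (adj X ** X) - adj (\<Phi> X) ** \<Phi> X))"

definition Ldag :: "real \<Rightarrow> real \<Rightarrow> real \<Rightarrow> real \<Rightarrow> cmat2 \<Rightarrow> cmat2" where
  "Ldag \<omega> gp gm gz X =
     csc (\<i> * of_real \<omega> / 2) (comm sigma_z X)
   + csc (of_real gp) (sigma_minus ** X ** sigma_plus - csc (1/2) (acomm (sigma_minus ** sigma_plus) X))
   + csc (of_real gm) (sigma_plus ** X ** sigma_minus - csc (1/2) (acomm (sigma_plus ** sigma_minus) X))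
   + csc (of_real gz) (sigma_z ** X ** sigma_z - X)"

definition expmap :: "real \<Rightarrow> (cmat2 \<Rightarrow> cmat2) \<Rightarrow> cmat2 \<Rightarrow> cmat2" where
  "expmap t L X = (\<Sum>n. (t ^ n / fact n) *\<^sub>R ((L ^^ n) X))"

end

theory Submission
  imports Defs
begin

text \<open>
  On the matrix units the generator multiplies the off-diagonal entries by
  \<open>\<lambda> = i \<omega> - (\<gamma>\<^sub>+ + \<gamma>\<^sub>-)/2 - 2 \<gamma>\<^sub>z\<close> and its conjugate, and moves the diagonal only
  through the difference \<open>a - d\<close>. So the semigroup is explicit:
  \<open>[[a, b], [c, d]] \<mapsto> [[a - P (a - d), k b], [cnj k c, d + Q (a - d)]]\<close> with
  \<open>P = \<gamma>\<^sub>- F\<close>, \<open>Q = \<gamma>\<^sub>+ F\<close>, \<open>F = (1 - exp (-G t)) / G\<close>, \<open>G = \<gamma>\<^sub>+ + \<gamma>\<^sub>-\<close>,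
  \<open>k = exp (t \<lambda>)\<close> and \<open>|k|\<^sup>2 = exp (-(G + 4 \<gamma>\<^sub>z) t)\<close>.
  Such a map is a unital Schwarz map iff \<open>P, Q \<ge> 0\<close> and \<open>|k|\<^sup>2 \<le> 1 - P\<close>, \<open>|k|\<^sup>2 \<le> 1 - Q\<close>:
  these are diagonal entries of the Schwarz defect at off-diagonal matrix units, and
  conversely the defect is a Hermitian matrix whose determinant is nonnegative by
  Cauchy-Schwarz. Under the stated conditions the bounds follow from convexity of \<open>exp\<close>;
  if \<open>\<gamma>\<^sub>- + 4 \<gamma>\<^sub>z < 0\<close> (or \<open>\<gamma>\<^sub>+ + 4 \<gamma>\<^sub>z < 0\<close>), a small \<open>t\<close> violates the bound
  involving \<open>Q\<close> (or \<open>P\<close>).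
\<close>

section \<open>Complex 2x2 matrices by entries\<close>

lemma mat2_eta: "X = mat2 (X$1$1) (X$1$2) (X$2$1) (X$2$2)"
  by (simp add: vec_eq_iff forall_2 mat2_def)

lemma mat2_nth:
  "mat2 a b c d $ 1 $ 1 = a" "mat2 a b c d $ 1 $ 2 = b"
  "mat2 a b c d $ 2 $ 1 = c" "mat2 a b c d $ 2 $ 2 = d"
  by (simp_all add: mat2_def)

lemma mat2_eq_iff:
  "mat2 a b c d = mat2 a' b' c' d' \<longleftrightarrow> a = a' \<and> b = b' \<and> c = c' \<and> d = d'"
  by (metis mat2_nth)

lemma mat2_mult:
  "mat2 a b c d ** mat2 a' b' c' d' =
     mat2 (a*a' + b*c') (a*b' + b*d') (c*a' + d*c') (c*b' + d*d')"
  by (simp add: vec_eq_iff forall_2 mat2_def matrix_matrix_mult_def sum_2)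

lemma mat2_add: "mat2 a b c d + mat2 a' b' c' d' = mat2 (a+a') (b+b') (c+c') (d+d')"
  by (simp add: vec_eq_iff forall_2 mat2_def)

lemma mat2_diff: "mat2 a b c d - mat2 a' b' c' d' = mat2 (a-a') (b-b') (c-c') (d-d')"
  by (simp add: vec_eq_iff forall_2 mat2_def)

lemma csc_mat2: "csc k (mat2 a b c d) = mat2 (k*a) (k*b) (k*c) (k*d)"
  by (simp add: vec_eq_iff forall_2 mat2_def csc_def)

lemma scaleR_mat2: "r *\<^sub>R mat2 a b c d = mat2 (r*a) (r*b) (r*c) (r*d)"
  by (simp add: vec_eq_iff forall_2 mat2_def del: scaleR_conv_of_real; simp add: scaleR_conv_of_real)

lemma adj_mat2: "adj (mat2 a b c d) = mat2 (cnj a) (cnj c) (cnj b) (cnj d)"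
  by (simp add: vec_eq_iff forall_2 mat2_def adj_def)

lemma mat_one_mat2: "mat 1 = mat2 1 0 0 1"
  by (simp add: vec_eq_iff forall_2 mat2_def mat_def)

lemmas mat2_simps = mat2_mult mat2_add mat2_diff csc_mat2 scaleR_mat2 adj_mat2 mat2_eq_iff

lemma sum_mat2:
  "(\<Sum>i\<in>S. mat2 (f i) (g i) (h i) (k i)) =
     mat2 (\<Sum>i\<in>S. f i) (\<Sum>i\<in>S. g i) (\<Sum>i\<in>S. h i) (\<Sum>i\<in>S. k i)"
  by (subst mat2_eta) (simp add: mat2_nth)

lemma sums_mat2:
  assumes "f sums A" "g sums B" "h sums C" "k sums D"
  shows "(\<lambda>n. mat2 (f n) (g n) (h n) (k n)) sums mat2 A B C D"
  using assms unfolding sums_def sum_mat2 unfolding mat2_def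
  by (auto intro!: tendsto_vec_lambda)

lemma sigma_matrices:
  "sigma_z = mat2 1 0 0 (-1)" "sigma_plus = mat2 0 1 0 0" "sigma_minus = mat2 0 0 1 0"
  by (simp_all add: sigma_z_def sigma_plus_def sigma_minus_def sigma_x_def sigma_y_def mat2_simps)

section \<open>The exponential of the generator\<close>

definition offdiag_eigenvalue :: "real \<Rightarrow> real \<Rightarrow> real \<Rightarrow> real \<Rightarrow> complex" where
  "offdiag_eigenvalue \<omega> gp gm gz = \<i> * \<omega> - (gp + gm) / 2 - 2 * gz"

text \<open>The integral of \<open>exp (-G s)\<close> over \<open>[0, t]\<close>; its value at \<open>G = 0\<close> is the limit \<open>t\<close>.\<close>

definition decay_integral :: "real \<Rightarrow> real \<Rightarrow> real" where
  "decay_integral G t = (if G = 0 then t else (1 - exp (- G * t)) / G)"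

lemma Ldag_mat2:
  "Ldag \<omega> gp gm gz (mat2 a b c d) =
     mat2 (gm * (d - a)) (offdiag_eigenvalue \<omega> gp gm gz * b)
          (cnj (offdiag_eigenvalue \<omega> gp gm gz) * c) (gp * (a - d))"
  by (simp add: Ldag_def sigma_matrices mat2_simps comm_def acomm_def offdiag_eigenvalue_def;
      simp add: algebra_simps)

lemma Ldag_power_mat2:
  "(Ldag \<omega> gp gm gz ^^ n) (mat2 a b c d) =
     mat2 (if n = 0 then a else - gm * (- (gp + gm)) ^ (n - 1) * (a - d))
          (offdiag_eigenvalue \<omega> gp gm gz ^ n * b)
          (cnj (offdiag_eigenvalue \<omega> gp gm gz) ^ n * c)
          (if n = 0 then d else gp * (- (gp + gm)) ^ (n - 1) * (a - d))"
proof (induction n)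
  case (Suc n)
  then show ?case
    by (cases n) (simp_all add: Ldag_mat2 algebra_simps)
qed simp

lemma decay_integral_sums:
  "(\<lambda>n. if n = 0 then 0 else t ^ n / fact n * (- G) ^ (n - 1)) sums decay_integral G t"
proof (cases "G = 0")
  case True
  then have "(\<lambda>n. if n = 0 then 0 else t ^ n / fact n * (- G) ^ (n - 1)) =
      (\<lambda>n. if n = 1 then t else 0)"
    by (auto simp: fun_eq_iff)
  then show ?thesis
    using True sums_single[of 1 "\<lambda>_. t"] by (simp add: decay_integral_def)
next
  case False
  have "(\<lambda>n. (- G * t) ^ n /\<^sub>R fact n - (if n = 0 then 1 else 0)) sums (exp (- G * t) - 1)"
    using sums_diff[OF exp_converges sums_single[of 0 "\<lambda>_. 1::real"]] by simp
  then have "(\<lambda>n. ((- G * t) ^ n /\<^sub>R fact n - (if n = 0 then 1 else 0)) / (- G))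
      sums ((exp (- G * t) - 1) / (- G))"
    by (rule sums_divide)
  moreover have "((- G * t) ^ n /\<^sub>R fact n - (if n = 0 then 1 else 0)) / (- G) =
      (if n = 0 then 0 else t ^ n / fact n * (- G) ^ (n - 1))" for n
  proof (cases n)
    case (Suc m)
    have "(- G * t) ^ n = - G * ((- G) ^ m * t ^ n)"
      unfolding Suc power_mult_distrib by simp
    then show ?thesis
      using False Suc by (simp add: divide_simps mult.commute)
  qed simp
  moreover have "(exp (- G * t) - 1) / (- G) = decay_integral G t"
    using False by (simp add: decay_integral_def field_simps)
  ultimately show ?thesis
    by simp
qed

definition damping_map :: "real \<Rightarrow> real \<Rightarrow> complex \<Rightarrow> cmat2 \<Rightarrow> cmat2" where
  "damping_map P Q k X =
     mat2 (X$1$1 - of_real P * (X$1$1 - X$2$2)) (k * X$1$2)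
          (cnj k * X$2$1) (X$2$2 + of_real Q * (X$1$1 - X$2$2))"

lemma damping_map_mat2:
  "damping_map P Q k (mat2 a b c d) =
     mat2 (a - of_real P * (a - d)) (k * b) (cnj k * c) (d + of_real Q * (a - d))"
  by (simp add: damping_map_def mat2_nth)

lemma expmap_Ldag:
  "expmap t (Ldag \<omega> gp gm gz) =
     damping_map (gm * decay_integral (gp + gm) t) (gp * decay_integral (gp + gm) t)
       (exp (of_real t * offdiag_eigenvalue \<omega> gp gm gz))"
proof
  fix X :: cmat2
  obtain a b c d where X: "X = mat2 a b c d"
    using mat2_eta by blast
  define l where "l = offdiag_eigenvalue \<omega> gp gm gz"
  define F where "F = decay_integral (gp + gm) t"
  define f where "f n = (if n = 0 then 0 else t ^ n / fact n * (- (gp + gm)) ^ (n - 1))" for n :: nat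
  have terms: "(\<lambda>n. (t ^ n / fact n) *\<^sub>R (Ldag \<omega> gp gm gz ^^ n) X) =
    (\<lambda>n. mat2 ((if n = 0 then a else 0) + of_real (f n) * (- gm * (a - d)))
       ((of_real t * l) ^ n /\<^sub>R fact n * b) ((of_real t * cnj l) ^ n /\<^sub>R fact n * c)
       ((if n = 0 then d else 0) + of_real (f n) * (gp * (a - d))))"
    unfolding X Ldag_power_mat2 scaleR_mat2 f_def l_def
    by (auto simp: fun_eq_iff mat2_eq_iff scaleR_conv_of_real power_mult_distrib
        divide_inverse algebra_simps)
  have f: "(\<lambda>n. of_real (f n) :: complex) sums of_real F"
    unfolding sums_of_real_iff f_def F_def by (rule decay_integral_sums)
  have "(\<lambda>n. (t ^ n / fact n) *\<^sub>R (Ldag \<omega> gp gm gz ^^ n) X) sums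
      mat2 (a + of_real F * (- gm * (a - d))) (exp (of_real t * l) * b)
        (exp (of_real t * cnj l) * c) (d + of_real F * (gp * (a - d)))"
    unfolding terms
    by (intro sums_mat2 sums_add sums_mult2 f exp_converges)
      (use sums_single[of 0 "\<lambda>_. a"] sums_single[of 0 "\<lambda>_. d"] in simp_all)
  then show "expmap t (Ldag \<omega> gp gm gz) X =
      damping_map (gm * F) (gp * F) (exp (of_real t * l)) X"
    unfolding expmap_def X damping_map_mat2
    by (auto dest!: sums_unique simp: exp_cnj mat2_eq_iff algebra_simps)
qed

lemma norm_exp_offdiag_eigenvalue_sq:
  "(cmod (exp (of_real t * offdiag_eigenvalue \<omega> gp gm gz)))\<^sup>2 = exp (- (gp + gm + 4 * gz) * t)"
proof -
  have "Re (of_real t * offdiag_eigenvalue \<omega> gp gm gz) = t * (- (gp + gm) / 2 - 2 * gz)"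
    by (simp add: offdiag_eigenvalue_def field_simps)
  then have "(cmod (exp (of_real t * offdiag_eigenvalue \<omega> gp gm gz)))\<^sup>2 =
      exp (2 * (t * (- (gp + gm) / 2 - 2 * gz)))"
    by (simp add: exp_double)
  then show ?thesis
    by (simp add: field_simps)
qed

section \<open>When the damping map is a unital Schwarz map\<close>

lemma of_real_cmod_power2: "(complex_of_real (cmod z))\<^sup>2 = z * cnj z"
  using complex_norm_square[of z] by simp

lemma cross_term_le:
  fixes a b c d m n :: real
  assumes "0 \<le> a" "0 \<le> b" "0 \<le> c" "0 \<le> d" "m\<^sup>2 \<le> a * c" "n\<^sup>2 \<le> b * d"
  shows "2 * m * n \<le> a * d + b * c"
proof -
  have "(2 * m * n)\<^sup>2 = 4 * m\<^sup>2 * n\<^sup>2"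
    by (simp add: power_mult_distrib)
  also have "\<dots> \<le> 4 * (a * c) * (b * d)"
    using assms by (intro mult_mono) (auto intro: mult_left_mono)
  also have "\<dots> \<le> (a * d + b * c)\<^sup>2"
    using zero_le_power2[of "a * d - b * c"] by (simp add: power2_eq_square algebra_simps)
  finally have "\<bar>2 * m * n\<bar> \<le> \<bar>a * d + b * c\<bar>"
    using abs_le_square_iff by blast
  then show ?thesis
    using assms by simp
qed

lemma sum3_sq_le_mult:
  fixes a1 a2 a3 c1 c2 c3 m1 m2 m3 :: real
  assumes "0 \<le> a1" "0 \<le> a2" "0 \<le> a3" "0 \<le> c1" "0 \<le> c2" "0 \<le> c3"
    and "m1\<^sup>2 \<le> a1 * c1" "m2\<^sup>2 \<le> a2 * c2" "m3\<^sup>2 \<le> a3 * c3"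
  shows "(m1 + m2 + m3)\<^sup>2 \<le> (a1 + a2 + a3) * (c1 + c2 + c3)"
proof -
  have "2 * m1 * m2 \<le> a1 * c2 + a2 * c1" "2 * m1 * m3 \<le> a1 * c3 + a3 * c1"
    "2 * m2 * m3 \<le> a2 * c3 + a3 * c2"
    by (rule cross_term_le; use assms in auto)+
  then show ?thesis
    using assms(7-9) by (simp add: power2_eq_square algebra_simps)
qed

text \<open>Here \<open>X = |a - d|\<close>, \<open>Y = |b|\<close>, \<open>Z = |c|\<close>, \<open>K = |k|\<close>. Splitting
  \<open>P Y = (P - Q) Y + Q Y\<close> pairs the terms of the left side with the summands of the two
  factors, so that Cauchy-Schwarz applies.\<close>

lemma damping_defect_det_bound:
  fixes P Q K X Y Z :: real
  assumes "0 \<le> Q" "Q \<le> P" "0 \<le> K" "K\<^sup>2 \<le> 1 - P"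
  shows "K\<^sup>2 * X\<^sup>2 * (P * Y + Q * Z)\<^sup>2 \<le>
     (P * (1 - P) * X\<^sup>2 + (1 - P - K\<^sup>2) * Z\<^sup>2 + P * Y\<^sup>2) *
     (Q * (1 - Q) * X\<^sup>2 + Q * Z\<^sup>2 + (1 - Q - K\<^sup>2) * Y\<^sup>2)"
proof -
  have P1: "P \<le> 1"
    using assms zero_le_power2[of K] by linarith
  have KQ: "K\<^sup>2 * Q \<le> (1 - P) * Q"
    using assms by (simp add: mult_right_mono)
  have h1: "0 \<le> P * (1 - Q) - Q * K\<^sup>2"
    using KQ assms mult_right_mono[OF \<open>Q \<le> P\<close>, of "1 - P"] by (simp add: algebra_simps)
  have h2: "0 \<le> 1 - P - K\<^sup>2"
    using assms by simp
  have "K\<^sup>2 * Q \<le> (1 - P) * P"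
    using KQ mult_left_mono[OF \<open>Q \<le> P\<close>, of "1 - P"] P1 by simp
  then have "0 \<le> P * (1 - P) - K\<^sup>2 * Q"
    by (simp add: algebra_simps)
  then have a1: "0 \<le> (P * (1 - P) - K\<^sup>2 * Q) * X\<^sup>2"
    by simp
  have m1: "(K * (P - Q) * X * Y)\<^sup>2 \<le> ((P * (1 - P) - K\<^sup>2 * Q) * X\<^sup>2) * ((1 - Q - K\<^sup>2) * Y\<^sup>2)"
  proof -
    have "((P * (1 - P) - K\<^sup>2 * Q) * X\<^sup>2) * ((1 - Q - K\<^sup>2) * Y\<^sup>2) - (K * (P - Q) * X * Y)\<^sup>2
        = (1 - P - K\<^sup>2) * (P * (1 - Q) - Q * K\<^sup>2) * (X\<^sup>2 * Y\<^sup>2)"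
      by (simp add: power2_eq_square algebra_simps)
    then show ?thesis
      using h1 h2 by (smt (verit) mult_nonneg_nonneg zero_le_power2)
  qed
  have m2: "(K * Q * X * Y)\<^sup>2 \<le> (P * Y\<^sup>2) * (Q * (1 - Q) * X\<^sup>2)"
  proof -
    have "(P * Y\<^sup>2) * (Q * (1 - Q) * X\<^sup>2) - (K * Q * X * Y)\<^sup>2 =
        Q * (P * (1 - Q) - Q * K\<^sup>2) * (X\<^sup>2 * Y\<^sup>2)"
      by (simp add: power2_eq_square algebra_simps)
    then show ?thesis
      using h1 assms by (smt (verit) mult_nonneg_nonneg zero_le_power2)
  qed
  have m3: "(K * Q * X * Z)\<^sup>2 \<le> (K\<^sup>2 * Q * X\<^sup>2) * (Q * Z\<^sup>2)"
    by (simp add: power2_eq_square algebra_simps)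
  have "(K * (P - Q) * X * Y + K * Q * X * Y + K * Q * X * Z)\<^sup>2 \<le>
      ((P * (1 - P) - K\<^sup>2 * Q) * X\<^sup>2 + P * Y\<^sup>2 + K\<^sup>2 * Q * X\<^sup>2) *
      ((1 - Q - K\<^sup>2) * Y\<^sup>2 + Q * (1 - Q) * X\<^sup>2 + Q * Z\<^sup>2)"
    by (rule sum3_sq_le_mult[OF a1 _ _ _ _ _ m1 m2 m3]) (use assms P1 in auto)
  also have "\<dots> \<le> (P * (1 - P) * X\<^sup>2 + (1 - P - K\<^sup>2) * Z\<^sup>2 + P * Y\<^sup>2) *
      ((1 - Q - K\<^sup>2) * Y\<^sup>2 + Q * (1 - Q) * X\<^sup>2 + Q * Z\<^sup>2)"
  proof (rule mult_right_mono)
    show "(P * (1 - P) - K\<^sup>2 * Q) * X\<^sup>2 + P * Y\<^sup>2 + K\<^sup>2 * Q * X\<^sup>2 \<le>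
        P * (1 - P) * X\<^sup>2 + (1 - P - K\<^sup>2) * Z\<^sup>2 + P * Y\<^sup>2"
      using mult_nonneg_nonneg[OF h2 zero_le_power2[of Z]] by (simp add: algebra_simps)
    show "0 \<le> (1 - Q - K\<^sup>2) * Y\<^sup>2 + Q * (1 - Q) * X\<^sup>2 + Q * Z\<^sup>2"
      using assms P1 by (intro add_nonneg_nonneg mult_nonneg_nonneg) auto
  qed
  finally show ?thesis
    by (simp add: power2_eq_square algebra_simps)
qed

lemma psd_hermitian_mat2:
  fixes a c :: real
  assumes "0 \<le> a" "0 \<le> c" "(cmod z)\<^sup>2 \<le> a * c"
  shows "psd (mat2 (of_real a) z (cnj z) (of_real c))"
  unfolding psd_def Let_def
proof
  fix v :: "complex^2"
  define x y where "x = v$1" and "y = v$2"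
  define w where "w = cnj x * z * y"
  have q: "(\<Sum>i\<in>UNIV. \<Sum>j\<in>UNIV. cnj (v$i) * mat2 (of_real a) z (cnj z) (of_real c) $i$j * v$j)
     = of_real (a * (cmod x)\<^sup>2 + c * (cmod y)\<^sup>2 + 2 * Re w)"
  proof -
    have "(\<Sum>i\<in>UNIV. \<Sum>j\<in>UNIV. cnj (v$i) * mat2 (of_real a) z (cnj z) (of_real c) $i$j * v$j)
       = of_real (a * (cmod x)\<^sup>2) + of_real (c * (cmod y)\<^sup>2) + (w + cnj w)"
      unfolding sum_2 mat2_nth x_def[symmetric] y_def[symmetric]
      by (simp add: of_real_cmod_power2 w_def; simp add: algebra_simps)
    then show ?thesis
      unfolding complex_add_cnj by simp
  qed
  have "(cmod z * cmod x * cmod y)\<^sup>2 \<le> (a * (cmod x)\<^sup>2) * (c * (cmod y)\<^sup>2)"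
    using mult_right_mono[OF assms(3), of "(cmod x)\<^sup>2 * (cmod y)\<^sup>2"]
    by (simp add: power_mult_distrib algebra_simps)
  then have "2 * (cmod z * cmod x * cmod y) * 1 \<le> a * (cmod x)\<^sup>2 * 1 + 1 * (c * (cmod y)\<^sup>2)"
    using assms by (intro cross_term_le) auto
  moreover have "- Re w \<le> cmod w" "cmod w = cmod z * cmod x * cmod y"
    using abs_Re_le_cmod[of w] by (auto simp: w_def norm_mult)
  ultimately show "Im (\<Sum>i\<in>UNIV. \<Sum>j\<in>UNIV. cnj (v$i) * mat2 (of_real a) z (cnj z) (of_real c) $i$j * v$j) = 0 \<and>
      0 \<le> Re (\<Sum>i\<in>UNIV. \<Sum>j\<in>UNIV. cnj (v$i) * mat2 (of_real a) z (cnj z) (of_real c) $i$j * v$j)"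
    unfolding q by simp
qed

lemma psd_diag_nonneg:
  assumes "psd M"
  shows "0 \<le> Re (M$1$1)" "0 \<le> Re (M$2$2)"
proof -
  have "\<And>v. 0 \<le> Re (\<Sum>i\<in>UNIV. \<Sum>j\<in>UNIV. cnj (v$i) * M$i$j * v$j)"
    using assms unfolding psd_def Let_def by blast
  from this[of "\<chi> k. if k = 1 then 1 else 0"] this[of "\<chi> k. if k = 2 then 1 else 0"]
  show "0 \<le> Re (M$1$1)" "0 \<le> Re (M$2$2)"
    by (simp_all add: sum_2)
qed

lemma damping_map_schwarz_defect:
  "damping_map P Q k (adj (mat2 a b c d) ** mat2 a b c d) -
     adj (damping_map P Q k (mat2 a b c d)) ** damping_map P Q k (mat2 a b c d) =
   mat2 (of_real (P * (1 - P) * (cmod (a - d))\<^sup>2 + (1 - P - (cmod k)\<^sup>2) * (cmod c)\<^sup>2 + P * (cmod b)\<^sup>2))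
        (k * (of_real P * cnj (a - d) * b - of_real Q * cnj c * (a - d)))
        (cnj (k * (of_real P * cnj (a - d) * b - of_real Q * cnj c * (a - d))))
        (of_real (Q * (1 - Q) * (cmod (a - d))\<^sup>2 + Q * (cmod c)\<^sup>2 + (1 - Q - (cmod k)\<^sup>2) * (cmod b)\<^sup>2))"
  unfolding adj_mat2 mat2_mult damping_map_mat2 mat2_diff mat2_eq_iff
  by (intro conjI; simp add: of_real_cmod_power2; simp add: algebra_simps)

lemma psd_damping_map_schwarz_defect:
  assumes "0 \<le> P" "0 \<le> Q" "(cmod k)\<^sup>2 \<le> 1 - P" "(cmod k)\<^sup>2 \<le> 1 - Q"
  shows "psd (damping_map P Q k (adj X ** X) - adj (damping_map P Q k X) ** damping_map P Q k X)"
proof -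
  obtain a b c d where X: "X = mat2 a b c d"
    using mat2_eta by blast
  define K where "K = cmod k"
  define u where "u = a - d"
  define z where "z = k * (of_real P * cnj u * b - of_real Q * cnj c * u)"
  define A where "A = P * (1 - P) * (cmod u)\<^sup>2 + (1 - P - K\<^sup>2) * (cmod c)\<^sup>2 + P * (cmod b)\<^sup>2"
  define C where "C = Q * (1 - Q) * (cmod u)\<^sup>2 + Q * (cmod c)\<^sup>2 + (1 - Q - K\<^sup>2) * (cmod b)\<^sup>2"
  have P1: "P \<le> 1" and Q1: "Q \<le> 1"
    using assms zero_le_power2[of "cmod k"] by linarith+
  have A0: "0 \<le> A" and C0: "0 \<le> C"
    unfolding A_def C_def K_def using assms P1 Q1 by (auto intro!: add_nonneg_nonneg)
  have "cmod z \<le> K * (P * cmod u * cmod b + Q * cmod c * cmod u)"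
  proof -
    have "cmod (of_real P * cnj u * b - of_real Q * cnj c * u) \<le>
        P * cmod u * cmod b + Q * cmod c * cmod u"
      using norm_triangle_ineq4[of "of_real P * cnj u * b" "of_real Q * cnj c * u"] assms
      by (simp add: norm_mult)
    then show ?thesis
      unfolding z_def K_def norm_mult by (intro mult_left_mono) auto
  qed
  then have "(cmod z)\<^sup>2 \<le> (K * (P * cmod u * cmod b + Q * cmod c * cmod u))\<^sup>2"
    by (intro power_mono) auto
  also have "\<dots> = K\<^sup>2 * (cmod u)\<^sup>2 * (P * cmod b + Q * cmod c)\<^sup>2"
    by (simp add: power2_eq_square algebra_simps)
  also have "\<dots> \<le> A * C"
  proof (cases "Q \<le> P")
    case True
    show ?thesis unfolding A_def C_def
      by (rule damping_defect_det_bound) (use True assms K_def in auto)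
  next
    case False
    have "K\<^sup>2 * (cmod u)\<^sup>2 * (Q * cmod c + P * cmod b)\<^sup>2 \<le>
        (Q * (1 - Q) * (cmod u)\<^sup>2 + (1 - Q - K\<^sup>2) * (cmod b)\<^sup>2 + Q * (cmod c)\<^sup>2) *
        (P * (1 - P) * (cmod u)\<^sup>2 + P * (cmod b)\<^sup>2 + (1 - P - K\<^sup>2) * (cmod c)\<^sup>2)"
      by (rule damping_defect_det_bound) (use False assms K_def in auto)
    then show ?thesis
      unfolding A_def C_def by (simp add: algebra_simps)
  qed
  finally have "psd (mat2 (of_real A) z (cnj z) (of_real C))"
    by (rule psd_hermitian_mat2[OF A0 C0])
  then show ?thesis
    unfolding X damping_map_schwarz_defect A_def C_def z_def u_def K_def .
qed

lemma unital_schwarz_damping_map_iff: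
  "unital_schwarz (damping_map P Q k) \<longleftrightarrow>
     0 \<le> P \<and> 0 \<le> Q \<and> (cmod k)\<^sup>2 \<le> 1 - P \<and> (cmod k)\<^sup>2 \<le> 1 - Q"
proof
  assume schwarz: "unital_schwarz (damping_map P Q k)"
  have defect: "psd (damping_map P Q k (adj (mat2 a b c d) ** mat2 a b c d) -
      adj (damping_map P Q k (mat2 a b c d)) ** damping_map P Q k (mat2 a b c d))" for a b c d
    using schwarz unfolding unital_schwarz_def by blast
  show "0 \<le> P \<and> 0 \<le> Q \<and> (cmod k)\<^sup>2 \<le> 1 - P \<and> (cmod k)\<^sup>2 \<le> 1 - Q"
    using psd_diag_nonneg[OF defect[of 0 1 0 0]] psd_diag_nonneg[OF defect[of 0 0 1 0]]
    by (simp add: damping_map_schwarz_defect mat2_nth)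
next
  assume "0 \<le> P \<and> 0 \<le> Q \<and> (cmod k)\<^sup>2 \<le> 1 - P \<and> (cmod k)\<^sup>2 \<le> 1 - Q"
  moreover have "clinear_map (damping_map P Q k)"
    unfolding clinear_map_def
  proof (intro allI)
    fix s :: complex and X Y :: cmat2
    obtain a b c d where "X = mat2 a b c d"
      using mat2_eta by blast
    moreover obtain a' b' c' d' where "Y = mat2 a' b' c' d'"
      using mat2_eta by blast
    ultimately show "damping_map P Q k (csc s X + Y) = csc s (damping_map P Q k X) + damping_map P Q k Y"
      by (simp add: csc_mat2 mat2_add damping_map_mat2 mat2_eq_iff algebra_simps)
  qed
  moreover have "damping_map P Q k (mat 1) = mat 1"
    by (simp add: mat_one_mat2 damping_map_mat2)
  ultimately show "unital_schwarz (damping_map P Q k)"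
    unfolding unital_schwarz_def using psd_damping_map_schwarz_defect by blast
qed

section \<open>The bounds as conditions on the rates\<close>

lemma decay_integral_pos:
  assumes "0 < t"
  shows "0 < decay_integral G t"
proof -
  consider "G = 0" | "0 < G" | "G < 0"
    by linarith
  then show ?thesis
  proof cases
    case 2
    then have "exp (- G * t) < 1"
      using assms by simp
    then show ?thesis
      using 2 by (simp add: decay_integral_def)
  next
    case 3
    then have "1 < exp (- G * t)"
      using assms by (simp add: mult_neg_pos)
    then show ?thesis
      using 3 by (simp add: decay_integral_def divide_neg_neg)
  qed (use assms in \<open>simp add: decay_integral_def\<close>)
qed

lemma nonneg_mult_decay_integral_iff:
  "(\<forall>t\<ge>0. 0 \<le> g * decay_integral G t) \<longleftrightarrow> 0 \<le> g"
proof
  assume "\<forall>t\<ge>0. 0 \<le> g * decay_integral G t"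
  then have "0 \<le> g * decay_integral G 1"
    by simp
  then show "0 \<le> g"
    using decay_integral_pos[of 1 G] by (simp add: zero_le_mult_iff)
next
  assume "0 \<le> g"
  moreover have "0 \<le> decay_integral G t" if "0 \<le> t" for t
    using decay_integral_pos[of t G] that by (cases "t = 0") (auto simp: decay_integral_def)
  ultimately show "\<forall>t\<ge>0. 0 \<le> g * decay_integral G t"
    by simp
qed

text \<open>Convexity of \<open>exp\<close> between \<open>0\<close> and \<open>-G t\<close>, at the point with weight \<open>g / G\<close>.\<close>

lemma exp_le_one_minus_mult_decay_integral:
  assumes "0 \<le> g" "g \<le> G"
  shows "exp (- g * t) \<le> 1 - g * decay_integral G t"
proof (cases "G = 0")
  case False
  define m where "m = g / G"
  have m: "0 \<le> m" "m \<le> 1"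
    using assms False by (auto simp: m_def)
  have "exp ((1 - m) *\<^sub>R 0 + m *\<^sub>R (- G * t)) \<le> (1 - m) * exp 0 + m * exp (- G * t)"
    by (rule convex_onD[OF exp_convex]) (use m in auto)
  moreover have "(1 - m) *\<^sub>R 0 + m *\<^sub>R (- G * t) = - g * t"
    using False by (simp add: m_def)
  moreover have "(1 - m) * exp 0 + m * exp (- G * t) = 1 - g * decay_integral G t"
    using False by (simp add: m_def decay_integral_def field_simps)
  ultimately show ?thesis
    by (simp only:)
qed (use assms in simp)

lemma decay_integral_lower_bound:
  assumes "0 \<le> G" "0 \<le> t"
  shows "t / (1 + G * t) \<le> decay_integral G t"
proof (cases "G = 0")
  case False
  have "exp (- G * t) * (1 + G * t) \<le> exp (- G * t) * exp (G * t)"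
    by (intro mult_left_mono exp_ge_add_one_self) auto
  then have "exp (- G * t) * (1 + G * t) \<le> 1"
    by (simp add: exp_add[symmetric])
  moreover have "0 < 1 + G * t"
    using assms by (simp add: add_pos_nonneg)
  ultimately have "G * t / (1 + G * t) \<le> 1 - exp (- G * t)"
    by (simp add: divide_simps algebra_simps)
  then show ?thesis
    using assms False by (simp add: decay_integral_def divide_simps mult.commute)
qed (simp add: decay_integral_def)

text \<open>With \<open>\<delta> = -(h + c) > 0\<close>, for small \<open>t\<close> the left side is \<open>1 - g t + O(t\<^sup>2)\<close> and
  the right side \<open>1 - g t + \<delta> t + O(t\<^sup>2)\<close>; the explicit \<open>t\<close> below makes this quantitative.\<close>

lemma decay_bound_fails:
  assumes "0 \<le> g" "0 \<le> h" "h + c < 0"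
  shows "\<exists>t\<ge>0. 1 - g * decay_integral (g + h) t < exp (- (g + h + c) * t)"
proof -
  define G where "G = g + h"
  define \<delta> where "\<delta> = - (h + c)"
  define t where "t = \<delta> / (g * G + 1)"
  have G: "0 \<le> G" and gG: "0 \<le> g * G" and \<delta>: "0 < \<delta>"
    using assms by (auto simp: G_def \<delta>_def)
  then have t: "0 < t"
    by (simp add: t_def)
  have pos: "0 < 1 + G * t"
    using t G by (simp add: add_pos_nonneg)
  have "g * t - g * (t / (1 + G * t)) = (g * G * t) * (t / (1 + G * t))"
    using pos by (simp add: field_simps)
  also have "\<dots> \<le> (g * G * t) * t"
    using pos t G gG by (intro mult_left_mono) (auto simp: divide_simps)
  also have "\<dots> < \<delta> * t"
    using \<delta> gG t by (simp add: t_def divide_simps)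
  finally have "g * t - g * (t / (1 + G * t)) < \<delta> * t" .
  moreover have "g * (t / (1 + G * t)) \<le> g * decay_integral G t"
    using decay_integral_lower_bound[OF G, of t] t assms by (intro mult_left_mono) auto
  moreover have "1 + (\<delta> - g) * t \<le> exp ((\<delta> - g) * t)"
    by (rule exp_ge_add_one_self)
  moreover have "- (g + h + c) = \<delta> - g"
    by (simp add: \<delta>_def)
  ultimately have "1 - g * decay_integral G t < exp (- (g + h + c) * t)"
    by (simp add: algebra_simps)
  then show ?thesis
    using t unfolding G_def by (intro exI[of _ t]) auto
qed

lemma decay_bound_iff:
  assumes "0 \<le> g" "0 \<le> h"
  shows "(\<forall>t\<ge>0. exp (- (g + h + c) * t) \<le> 1 - g * decay_integral (g + h) t) \<longleftrightarrow> 0 \<le> h + c"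
proof
  assume "0 \<le> h + c"
  then have "exp (- (g + h + c) * t) \<le> exp (- g * t)" if "0 \<le> t" for t
    using that by (intro exp_mono mult_right_mono) auto
  then show "\<forall>t\<ge>0. exp (- (g + h + c) * t) \<le> 1 - g * decay_integral (g + h) t"
    using exp_le_one_minus_mult_decay_integral[of g "g + h"] assms by (meson order_trans le_add_same_cancel1)
next
  assume "\<forall>t\<ge>0. exp (- (g + h + c) * t) \<le> 1 - g * decay_integral (g + h) t"
  then show "0 \<le> h + c"
    using decay_bound_fails[OF assms] by (meson not_le)
qed

theorem mainTheorem8:
  fixes \<omega> gp gm gz :: real
  shows "(\<forall>t\<ge>0. unital_schwarz (expmap t (Ldag \<omega> gp gm gz))) \<longleftrightarrow>
         (gp \<ge> 0 \<and> gm \<ge> 0 \<and> gp + 4 * gz \<ge> 0 \<and> gm + 4 * gz \<ge> 0)"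
proof -
  define F where "F t = decay_integral (gp + gm) t" for t
  define E where "E t = exp (- (gp + gm + 4 * gz) * t)" for t
  have "(\<forall>t\<ge>0. unital_schwarz (expmap t (Ldag \<omega> gp gm gz))) \<longleftrightarrow>
      (\<forall>t\<ge>0. 0 \<le> gm * F t) \<and> (\<forall>t\<ge>0. 0 \<le> gp * F t) \<and>
      (\<forall>t\<ge>0. E t \<le> 1 - gm * F t) \<and> (\<forall>t\<ge>0. E t \<le> 1 - gp * F t)"
    unfolding expmap_Ldag unital_schwarz_damping_map_iff norm_exp_offdiag_eigenvalue_sq F_def E_def
    by blast
  moreover have "(\<forall>t\<ge>0. E t \<le> 1 - gm * F t) \<longleftrightarrow> 0 \<le> gp + 4 * gz" if "0 \<le> gp" "0 \<le> gm"
    using decay_bound_iff[OF that(2,1), of "4 * gz"] by (simp add: E_def F_def add_ac)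
  moreover have "(\<forall>t\<ge>0. E t \<le> 1 - gp * F t) \<longleftrightarrow> 0 \<le> gm + 4 * gz" if "0 \<le> gp" "0 \<le> gm"
    using decay_bound_iff[OF that, of "4 * gz"] by (simp add: E_def F_def add_ac)
  ultimately show ?thesis
    unfolding F_def nonneg_mult_decay_integral_iff by blast
qed

end
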